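(* In the setting described in the context, assume A1, A2 and A3. Suppose there exist a fixed subset $\mathcal K^*\subseteq\{1,\dots,K\}$ and a constant $\delta>0$ such that $\inf_{\mathbf w\in\mathcal W^*}\sum_{k\in\mathcal K^*}w_k\ge\frac12+\delta$ and $$\limsup_{n\to\infty}\Pr\Big(\bigcup_{k\in\mathcal K^*}\{Y\notin\mathcal C_k(\mathbf X;\mathcal D_n)\}\Big)\le\alpha.$$ Then $\liminf_{n\to\infty}\Pr\big(Y\in\mathcal C_{\mathrm{comb}}(\mathbf X;\mathcal D_n)\big)\ge1-\alpha$.
   Context: Setting: fix $K\ge2$ and $\alpha\in(0,1)$. For each sample size $n$, on a common probability space there are a random data set $\mathcal D_n$ and a random test pair $(\mathbf X,Y)$ with $\mathbf X\in\mathcal X\subseteq\mathbb R^p$, $Y\in\mathbb R$. For each $k\in\{1,\dots,K\}$ there is a random prediction set $\mathcal C_k(\mathbf X;\mathcal D_n)\subseteq\mathbb R$, determined by $\mathcal D_n$ and $\mathbf X$, such that the events $\{Y\in\mathcal C_k(\mathbf X;\mathcal D_n)\}$ are measurable. Let $\Delta^{K-1}=\{\mathbf w\in[0,1]^K:w_k\ge0,\sum_k w_k=1\}$ and let $\widehat{\mathbf w}_n=(\widehat w_{n,1},\dots,\widehat w_{n,K})$ be a $\sigma(\mathcal D_n)$-measurable random vector in $\Delta^{K-1}$. Let $\mathcal W^*\subseteq\Delta^{K-1}$ be a nonempty closed convex set; $\|\cdot\|$ is the Euclidean norm. A1: for every $n$ and every $k$, $\Pr(Y\notin\mathcal C_k(\mathbf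 X;\mathcal D_n)\mid\mathcal D_n)\le\alpha$ almost surely. A2: $\inf_{\mathbf w\in\mathcal W^*}\|\widehat{\mathbf w}_n-\mathbf w\|\to0$ in probability as $n\to\infty$. A3: $\mathcal C_{\mathrm{comb}}(\mathbf X;\mathcal D_n):=\{y\in\mathbb R:\sum_{k=1}^K\widehat w_{n,k}\mathbf 1\{y\in\mathcal C_k(\mathbf X;\mathcal D_n)\}>1/2\}$. *)

theory Defs
  imports "HOL-Probability.Probability"
begin

text \<open>Probability simplex over the finite index type 'k (indices 1..K are identified
 with the elements of 'k, K = CARD('k)).\<close>
definition prob_simplex :: "(real ^ 'k::finite) set" where
  "prob_simplex = {w. (\<forall>k. 0 \<le> w $ k) \<and> (\<Sum>k\<in>UNIV. w $ k) = 1}"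

text \<open>Combined (weighted majority vote) prediction set, assumption A3.\<close>
definition comb_set :: "(real ^ 'k::finite) \<Rightarrow> ('k \<Rightarrow> real set) \<Rightarrow> real set" where
  "comb_set w C = {y. (\<Sum>k\<in>UNIV. w $ k * indicator (C k) y) > 1/2}"

definition cond_prob :: "'a measure \<Rightarrow> 'a measure \<Rightarrow> 'a set \<Rightarrow> 'a \<Rightarrow> real" where
  "cond_prob M F A = real_cond_exp M F (indicator A)"

end

theory Submission
  imports Defs
begin

text \<open>Once the weights are within distance \<open>\<epsilon>\<close> of \<open>W*\<close>, with \<open>|K*| \<epsilon> < \<delta>\<close>, the methods in \<open>K*\<close>
  carry total weight above \<open>1/2\<close>; so whenever \<open>Y\<close> lies in all of their sets it lies in the
  majority-vote set. Hence the combined set misses \<open>Y\<close> only if some method of \<open>K*\<close> misses it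
  or the weights are far from \<open>W*\<close>, and a union bound gives
  \<open>P(Y \<in> C_comb) \<ge> 1 - P(some k \<in> K* misses) - P(dist(w, W*) > \<epsilon>)\<close>, whose \<open>liminf\<close> is at least
  \<open>1 - \<alpha>\<close>.\<close>

lemma measurable_from_vimage_algebra:
  assumes "g \<in> measurable M N" "f \<in> measurable (vimage_algebra (space M) g N) L"
  shows "f \<in> measurable M L"
proof (rule measurable_from_subalg[OF _ assms(2)])
  show "subalgebra M (vimage_algebra (space M) g N)"
    using sets_image_in_sets[OF refl assms(1)] unfolding subalgebra_def by simp
qed

lemma sets_Collect_mem_comb_set:
  fixes w :: "'a \<Rightarrow> real ^ 'k::finite"
  assumes w: "w \<in> borel_measurable M"
    and C: "\<And>k. {\<omega> \<in> space M. y \<omega> \<in> C \<omega> k} \<in> sets M"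
  shows "{\<omega> \<in> space M. y \<omega> \<in> comb_set (w \<omega>) (C \<omega>)} \<in> sets M"
proof -
  let ?A = "\<lambda>k. {\<omega> \<in> space M. y \<omega> \<in> C \<omega> k}"
  have "{\<omega> \<in> space M. y \<omega> \<in> comb_set (w \<omega>) (C \<omega>)}
      = {\<omega> \<in> space M. (\<Sum>k\<in>UNIV. w \<omega> $ k * indicator (?A k) \<omega>) > 1/2}"
    by (auto simp: comb_set_def indicator_def)
  also have "\<dots> \<in> sets M"
    using C measurable_compose[OF w borel_measurable_nth]
    by (intro borel_measurable_less borel_measurable_sum borel_measurable_times
        borel_measurable_indicator) auto
  finally show ?thesis .
qed

lemma sum_le_sum_plus_card_dist:
  fixes u v :: "real ^ 'k::finite"
  shows "(\<Sum>k\<in>S. v $ k) \<le> (\<Sum>k\<in>S. u $ k) + real (card S) * dist u v"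
proof -
  have "v $ k \<le> u $ k + dist u v" for k
    using component_le_norm_cart[of "v - u" k] by (simp add: dist_norm norm_minus_commute)
  then have "(\<Sum>k\<in>S. v $ k) \<le> (\<Sum>k\<in>S. u $ k + dist u v)"
    by (rule sum_mono)
  then show ?thesis
    by (simp add: sum.distrib)
qed

lemma sum_gt_half_if_near_majority_set:
  fixes u :: "real ^ 'k::finite"
  assumes W: "closed W" "W \<noteq> {}" "W \<subseteq> prob_simplex"
    and weight: "(INF v\<in>W. \<Sum>k\<in>S. v $ k) \<ge> 1/2 + \<delta>"
    and near: "infdist u W \<le> \<epsilon>" "real (card S) * \<epsilon> < \<delta>"
  shows "(\<Sum>k\<in>S. u $ k) > 1/2"
proof -
  obtain v where v: "v \<in> W" "infdist u W = dist u v"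
    using infdist_attains_inf[OF W(1,2)] by blast
  have "bdd_below ((\<lambda>v. \<Sum>k\<in>S. v $ k) ` W)"
    using W(3) by (auto intro!: bdd_belowI[of _ 0] sum_nonneg simp: prob_simplex_def)
  then have "1/2 + \<delta> \<le> (\<Sum>k\<in>S. v $ k)"
    using weight cINF_lower[OF _ v(1)] by fastforce
  also have "\<dots> \<le> (\<Sum>k\<in>S. u $ k) + real (card S) * dist u v"
    by (rule sum_le_sum_plus_card_dist)
  finally have "1/2 + \<delta> \<le> (\<Sum>k\<in>S. u $ k) + real (card S) * dist u v" .
  moreover have "real (card S) * dist u v \<le> real (card S) * \<epsilon>"
    using near(1) v(2) by (intro mult_left_mono) simp_all
  ultimately show ?thesis
    using near(2) by linarith
qed

lemma mem_comb_set_if_majority_covers: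
  assumes "\<And>k. 0 \<le> u $ k" "(\<Sum>k\<in>S. u $ k) > 1/2" "\<And>k. k \<in> S \<Longrightarrow> y \<in> C k"
  shows "y \<in> comb_set u C"
proof -
  have "1/2 < (\<Sum>k\<in>S. u $ k * indicator (C k) y)"
    using assms(2,3) by (simp add: indicator_def)
  also have "\<dots> \<le> (\<Sum>k\<in>UNIV. u $ k * indicator (C k) y)"
    using assms(1) by (intro sum_mono2) auto
  finally show ?thesis
    unfolding comb_set_def by simp
qed

lemma liminf_ge_if_bounded_by_limsup:
  fixes b e g :: "nat \<Rightarrow> real"
  assumes bound: "\<And>n. c - e n - g n \<le> b n"
    and e: "limsup (\<lambda>n. ereal (e n)) \<le> ereal a"
    and g: "g \<longlonglongrightarrow> 0"
  shows "ereal (c - a) \<le> liminf (\<lambda>n. ereal (b n))"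
  unfolding le_Liminf_iff
proof (intro allI impI)
  fix y assume "y < ereal (c - a)"
  then obtain r where r: "y < ereal r" "r < c - a"
    using ereal_dense2 by (metis less_ereal.simps(1))
  define \<eta> where "\<eta> = (c - a - r) / 2"
  have "\<eta> > 0"
    using r(2) by (simp add: \<eta>_def)
  then have "ereal a < ereal (a + \<eta>)"
    by simp
  then have "\<forall>\<^sub>F n in sequentially. ereal (e n) < ereal (a + \<eta>)"
    using e unfolding Limsup_le_iff by blast
  moreover have "\<forall>\<^sub>F n in sequentially. g n < \<eta>"
    using order_tendstoD(2)[OF g] \<open>\<eta> > 0\<close> by blast
  ultimately show "\<forall>\<^sub>F n in sequentially. y < ereal (b n)"
  proof eventually_elim
    case (elim n)
    then have "r < b n"
      using bound[of n] by (simp add: \<eta>_def field_simps)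
    then show ?case
      using r(1) by (meson less_ereal.simps(1) order.strict_trans)
  qed
qed

lemma (in prob_space) liminf_prob_ge_if_covered:
  assumes sets: "\<And>n. E n \<in> events" "\<And>n. G n \<in> events" "\<And>n. B n \<in> events"
    and cover: "\<And>n. space M - (E n \<union> G n) \<subseteq> B n"
    and E: "limsup (\<lambda>n. ereal (prob (E n))) \<le> ereal a"
    and G: "(\<lambda>n. prob (G n)) \<longlonglongrightarrow> 0"
  shows "ereal (1 - a) \<le> liminf (\<lambda>n. ereal (prob (B n)))"
proof (rule liminf_ge_if_bounded_by_limsup[OF _ E G])
  fix n
  have "1 - prob (E n) - prob (G n) \<le> 1 - prob (E n \<union> G n)"
    using measure_Un_le[OF sets(1)[of n] sets(2)[of n]] by linarith
  also have "\<dots> = prob (space M - (E n \<union> G n))"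
    using sets by (simp add: prob_compl)
  also have "\<dots> \<le> prob (B n)"
    using sets cover by (intro finite_measure_mono) auto
  finally show "1 - prob (E n) - prob (G n) \<le> prob (B n)" .
qed

theorem theorem2:
  fixes M :: "'a measure" and Dsp :: "'d measure"
    and D :: "nat \<Rightarrow> 'a \<Rightarrow> 'd"
    and X :: "'a \<Rightarrow> real ^ 'p::finite" and Y :: "'a \<Rightarrow> real"
    and C :: "nat \<Rightarrow> 'k::finite \<Rightarrow> real ^ 'p \<Rightarrow> 'd \<Rightarrow> real set"
    and w :: "nat \<Rightarrow> 'a \<Rightarrow> real ^ 'k"
    and Wstar :: "(real ^ 'k) set"
    and Kstar :: "'k set"
    and \<alpha> \<delta> :: real
  assumes M: "prob_space M"
    and K2: "CARD('k) \<ge> 2"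
    and alpha: "0 < \<alpha>" "\<alpha> < 1"
    and D_meas: "\<And>n. D n \<in> measurable M Dsp"
    and X_meas: "X \<in> borel_measurable M"
    and Y_meas: "Y \<in> borel_measurable M"
    and C_meas: "\<And>n k. {\<omega> \<in> space M. Y \<omega> \<in> C n k (X \<omega>) (D n \<omega>)} \<in> sets M"
    and w_meas: "\<And>n. w n \<in> borel_measurable (vimage_algebra (space M) (D n) Dsp)"
    and w_simplex: "\<And>n \<omega>. \<omega> \<in> space M \<Longrightarrow> w n \<omega> \<in> prob_simplex"
    and W_ne: "Wstar \<noteq> {}" and W_closed: "closed Wstar" and W_convex: "convex Wstar"
    and W_sub: "Wstar \<subseteq> prob_simplex"
    and A1: "\<And>n k. AE \<omega> in M.
               cond_prob M (vimage_algebra (space M) (D n) Dsp)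
                 {\<omega>' \<in> space M. Y \<omega>' \<notin> C n k (X \<omega>') (D n \<omega>')} \<omega> \<le> \<alpha>"
    and A2: "\<And>\<epsilon>. \<epsilon> > 0 \<Longrightarrow>
               (\<lambda>n. measure M {\<omega> \<in> space M. infdist (w n \<omega>) Wstar > \<epsilon>}) \<longlonglongrightarrow> 0"
    and delta: "\<delta> > 0"
    and Kstar_weight: "(INF v\<in>Wstar. \<Sum>k\<in>Kstar. v $ k) \<ge> 1/2 + \<delta>"
    and Kstar_cov: "limsup (\<lambda>n. ereal (measure M
               {\<omega> \<in> space M. \<exists>k\<in>Kstar. Y \<omega> \<notin> C n k (X \<omega>) (D n \<omega>)})) \<le> ereal \<alpha>"
  shows "liminf (\<lambda>n. ereal (measure M
               {\<omega> \<in> space M. Y \<omega> \<in> comb_set (w n \<omega>) (\<lambda>k. C n k (X \<omega>) (D n \<omega>))}))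
           \<ge> ereal (1 - \<alpha>)"
proof -
  interpret prob_space M by (rule M)
  define \<epsilon> where "\<epsilon> = \<delta> / (real (card Kstar) + 1)"
  have \<epsilon>: "\<epsilon> > 0" "real (card Kstar) * \<epsilon> < \<delta>"
    using delta by (auto simp: \<epsilon>_def field_simps)
  define E where "E n = {\<omega> \<in> space M. \<exists>k\<in>Kstar. Y \<omega> \<notin> C n k (X \<omega>) (D n \<omega>)}" for n
  define G where "G n = {\<omega> \<in> space M. infdist (w n \<omega>) Wstar > \<epsilon>}" for n
  define B where
    "B n = {\<omega> \<in> space M. Y \<omega> \<in> comb_set (w n \<omega>) (\<lambda>k. C n k (X \<omega>) (D n \<omega>))}" for n
  have w_M: "w n \<in> borel_measurable M" for n
    by (rule measurable_from_vimage_algebra[OF D_meas w_meas])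
  have "ereal (1 - \<alpha>) \<le> liminf (\<lambda>n. ereal (prob (B n)))"
  proof (rule liminf_prob_ge_if_covered[where E = E and G = G])
    show "E n \<in> events" for n
      unfolding E_def using C_meas by (intro sets.sets_Collect_finite_Ex sets.sets_Collect_neg) auto
    show "G n \<in> events" for n
      unfolding G_def using measurable_compose[OF w_M borel_measurable_continuous_onI
          [OF continuous_on_infdist[OF continuous_on_id]]]
      by (intro borel_measurable_less) simp_all
    show "B n \<in> events" for n
      unfolding B_def using w_M C_meas by (rule sets_Collect_mem_comb_set)
    show "space M - (E n \<union> G n) \<subseteq> B n" for n
    proof
      fix \<omega> assume "\<omega> \<in> space M - (E n \<union> G n)"
      then have \<omega>: "\<omega> \<in> space M" "infdist (w n \<omega>) Wstar \<le> \<epsilon>"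
        and covered: "\<And>k. k \<in> Kstar \<Longrightarrow> Y \<omega> \<in> C n k (X \<omega>) (D n \<omega>)"
        unfolding E_def G_def by auto
      have majority: "(\<Sum>k\<in>Kstar. w n \<omega> $ k) > 1/2"
        using \<omega>(2) \<epsilon>(2) by (rule sum_gt_half_if_near_majority_set[OF W_closed W_ne W_sub Kstar_weight])
      have "0 \<le> w n \<omega> $ k" for k
        using w_simplex[OF \<omega>(1)] by (simp add: prob_simplex_def)
      then have "Y \<omega> \<in> comb_set (w n \<omega>) (\<lambda>k. C n k (X \<omega>) (D n \<omega>))"
        using majority covered by (rule mem_comb_set_if_majority_covers)
      then show "\<omega> \<in> B n"
        unfolding B_def using \<omega>(1) by simp
    qed
    show "limsup (\<lambda>n. ereal (prob (E n))) \<le> ereal \<alpha>"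
      using Kstar_cov by (simp add: E_def)
    show "(\<lambda>n. prob (G n)) \<longlonglongrightarrow> 0"
      using A2[OF \<epsilon>(1)] by (simp add: G_def)
  qed
  then show ?thesis
    by (simp add: B_def)
qed

end
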